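(* Let $\mathbb{K}=(G,M,I)$ be a finite formal context. Then the concept lattice of the Birkhoff completion of $\mathbb{K}$ is isomorphic to the Birkhoff completion of the concept lattice of $\mathbb{K}$: $\underline{\mathfrak{B}}(BC(\mathbb{K}))\cong BC(\underline{\mathfrak{B}}(\mathbb{K}))$.
   Context: A formal context $\mathbb{K}=(G,M,I)$ has derivation operators $A'=\{m\in M\mid \forall g\in A:(g,m)\in I\}$ for $A\subseteq G$ and $B'=\{g\in G\mid\forall m\in B:(g,m)\in I\}$ for $B\subseteq M$; formal concepts are pairs $(A,B)$ with $A'=B$, $B'=A$, ordered by inclusion of extents, forming the concept lattice $\underline{\mathfrak{B}}(\mathbb{K})$. The attribute concept of $m$ is $\mu m=(\{m\}',\{m\}'')$. For $m,n\in M$ write $m\ge_{\mathbb{K}} n$ iff $\{m\}'\supseteq\{n\}'$. Let $\mathcal{M}(M)$ be the set of attributes $m\in M$ whose attribute concept $\mu m$ is meet-irreducible in $\underline{\mathfrak{B}}(\mathbb{K})$, and let $\overline{\mathcal{M}(M)}=\{\overline m\mid m\in\mathcal{M}(M)\}$ be a set of new elements (disjoint copies, disjoint from $G$). The Birkhoff completion of $\mathbb{K}$ is the context $BC(\mathbb{K}):=\big(G\cup\overline{\mathcal{M}(M)},\,M,\,I\cup\{(\overline m,n)\in\overline{\mathcal{M}(M)}\times M\mid m\not\ge_{\mathbb{K}} n\}\big)$. For a finite lattice $L$ with set $\mathcal{M}(L)$ of meet-irreducible elements, $BC(L):=(\mathcal{F}(\mathcal{M}(L)),\supseteq)$, the order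 filters of $\mathcal{M}(L)$ ordered by reverse inclusion. *)

theory Defs
  imports Main
begin

definition ext_der :: "'m set \<Rightarrow> ('g \<times> 'm) set \<Rightarrow> 'g set \<Rightarrow> 'm set" where
  "ext_der M I A = {m \<in> M. \<forall>g\<in>A. (g, m) \<in> I}"

definition int_der :: "'g set \<Rightarrow> ('g \<times> 'm) set \<Rightarrow> 'm set \<Rightarrow> 'g set" where
  "int_der G I B = {g \<in> G. \<forall>m\<in>B. (g, m) \<in> I}"

definition concepts :: "'g set \<Rightarrow> 'm set \<Rightarrow> ('g \<times> 'm) set \<Rightarrow> ('g set \<times> 'm set) set" where
  "concepts G M I = {(A, B). A \<subseteq> G \<and> B \<subseteq> M \<and> ext_der M I A = B \<and> int_der G I B = A}"

definition concept_le :: "('g set \<times> 'm set) \<Rightarrow> ('g set \<times> 'm set) \<Rightarrow> bool" where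
  "concept_le c d \<longleftrightarrow> fst c \<subseteq> fst d"

definition attr_concept :: "'g set \<Rightarrow> 'm set \<Rightarrow> ('g \<times> 'm) set \<Rightarrow> 'm \<Rightarrow> ('g set \<times> 'm set)" where
  "attr_concept G M I m = (int_der G I {m}, ext_der M I (int_der G I {m}))"

definition is_meet :: "'a set \<Rightarrow> ('a \<Rightarrow> 'a \<Rightarrow> bool) \<Rightarrow> 'a \<Rightarrow> 'a \<Rightarrow> 'a \<Rightarrow> bool" where
  "is_meet P le x a b \<longleftrightarrow> x \<in> P \<and> le x a \<and> le x b \<and> (\<forall>c\<in>P. le c a \<and> le c b \<longrightarrow> le c x)"

definition meet_irreducible :: "'a set \<Rightarrow> ('a \<Rightarrow> 'a \<Rightarrow> bool) \<Rightarrow> 'a \<Rightarrow> bool" where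
  "meet_irreducible P le x \<longleftrightarrow> x \<in> P \<and> (\<exists>y\<in>P. \<not> le y x) \<and>
     (\<forall>a\<in>P. \<forall>b\<in>P. is_meet P le x a b \<longrightarrow> x = a \<or> x = b)"

definition meet_irr_set :: "'a set \<Rightarrow> ('a \<Rightarrow> 'a \<Rightarrow> bool) \<Rightarrow> 'a set" where
  "meet_irr_set P le = {x \<in> P. meet_irreducible P le x}"

definition MI_attrs :: "'g set \<Rightarrow> 'm set \<Rightarrow> ('g \<times> 'm) set \<Rightarrow> 'm set" where
  "MI_attrs G M I = {m \<in> M. meet_irreducible (concepts G M I) concept_le (attr_concept G M I m)}"

text \<open>Birkhoff completion of a context. Objects: Inl g for g in G, Inr m (the copy m-bar)
  for m in MI_attrs. m >=_K n iff {m}' \<supseteq> {n}'.\<close>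
definition BC_obj :: "'g set \<Rightarrow> 'm set \<Rightarrow> ('g \<times> 'm) set \<Rightarrow> ('g + 'm) set" where
  "BC_obj G M I = Inl ` G \<union> Inr ` MI_attrs G M I"

definition BC_inc :: "'g set \<Rightarrow> 'm set \<Rightarrow> ('g \<times> 'm) set \<Rightarrow> (('g + 'm) \<times> 'm) set" where
  "BC_inc G M I = {(Inl g, m) | g m. (g, m) \<in> I} \<union>
     {(Inr m, n) | m n. m \<in> MI_attrs G M I \<and> n \<in> M \<and>
        \<not> (int_der G I {n} \<subseteq> int_der G I {m})}"

text \<open>Birkhoff completion of a finite lattice: order filters of its meet-irreducibles
  (w.r.t. the induced order), ordered by reverse inclusion.\<close>
definition order_filters :: "'a set \<Rightarrow> ('a \<Rightarrow> 'a \<Rightarrow> bool) \<Rightarrow> 'a set set" where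
  "order_filters Q le = {F. F \<subseteq> Q \<and> (\<forall>x\<in>F. \<forall>y\<in>Q. le x y \<longrightarrow> y \<in> F)}"

definition BC_lattice :: "'a set \<Rightarrow> ('a \<Rightarrow> 'a \<Rightarrow> bool) \<Rightarrow> 'a set set" where
  "BC_lattice P le = order_filters (meet_irr_set P le) le"

definition order_iso :: "'a set \<Rightarrow> ('a \<Rightarrow> 'a \<Rightarrow> bool) \<Rightarrow> 'b set \<Rightarrow> ('b \<Rightarrow> 'b \<Rightarrow> bool) \<Rightarrow> bool" where
  "order_iso P leP Q leQ \<longleftrightarrow> (\<exists>f. bij_betw f P Q \<and> (\<forall>x\<in>P. \<forall>y\<in>P. leP x y \<longleftrightarrow> leQ (f x) (f y)))"

end

theory Submission
  imports Defs
begin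

text \<open>
  The intent of a concept of \<open>BC(\<bbbK>)\<close> is upward closed with respect to \<open>\<ge>\<^sub>\<bbbK>\<close>, because the new
  object \<open>m\<close>-bar lacks exactly the attributes \<open>n\<close> with \<open>m \<ge>\<^sub>\<bbbK> n\<close>. In a finite context every
  concept is the meet of the meet-irreducible concepts above it, and every meet-irreducible
  concept is an attribute concept. Hence such an intent \<open>B\<close> consists of exactly those \<open>n\<close> for
  which every meet-irreducible \<open>d \<ge> \<mu>n\<close> has its intent inside \<open>B\<close>: it is recovered from the
  order filter of meet-irreducibles whose intent lies in \<open>B\<close>. Conversely every order filter
  \<open>F\<close> arises this way, from the intent of all \<open>n\<close> such that \<open>\<mu>n \<le> d\<close> implies \<open>d \<in> F\<close>.
\<close>

lemma conceptsD:
  assumes "c \<in> concepts G M I"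
  shows "fst c \<subseteq> G" "snd c \<subseteq> M" "ext_der M I (fst c) = snd c" "int_der G I (snd c) = fst c"
  using assms by (auto simp: concepts_def)

lemma concept_eqI_fst:
  assumes "c \<in> concepts G M I" "d \<in> concepts G M I" "fst c = fst d"
  shows "c = d"
  using conceptsD[OF assms(1)] conceptsD[OF assms(2)] assms(3) by (metis prod.collapse)

lemma mem_intent_iff:
  assumes "c \<in> concepts G M I"
  shows "n \<in> snd c \<longleftrightarrow> n \<in> M \<and> fst c \<subseteq> int_der G I {n}"
  using conceptsD[OF assms] by (auto simp: ext_der_def int_der_def)

lemma extent_subset_iff_intent_subset:
  assumes "c \<in> concepts G M I" "d \<in> concepts G M I"
  shows "fst c \<subseteq> fst d \<longleftrightarrow> snd d \<subseteq> snd c"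
proof
  assume "fst c \<subseteq> fst d"
  then show "snd d \<subseteq> snd c"
    using conceptsD(3)[OF assms(1)] conceptsD(3)[OF assms(2)] unfolding ext_der_def by blast
next
  assume "snd d \<subseteq> snd c"
  then show "fst c \<subseteq> fst d"
    using conceptsD(4)[OF assms(1)] conceptsD(4)[OF assms(2)] unfolding int_der_def by blast
qed

lemma int_der_concept:
  assumes "B \<subseteq> M"
  shows "(int_der G I B, ext_der M I (int_der G I B)) \<in> concepts G M I"
  using assms unfolding concepts_def int_der_def ext_der_def by auto

lemma top_concept: "(G, ext_der M I G) \<in> concepts G M I"
  using int_der_concept[of "{}" M G I] by (simp add: int_der_def)

lemma meet_concept:
  assumes "a \<in> concepts G M I" "b \<in> concepts G M I"
  defines "e \<equiv> (fst a \<inter> fst b, ext_der M I (fst a \<inter> fst b))"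
  shows "e \<in> concepts G M I" "is_meet (concepts G M I) concept_le e a b"
proof -
  have "fst a \<inter> fst b = int_der G I (snd a \<union> snd b)" "snd a \<union> snd b \<subseteq> M"
    using conceptsD[OF assms(1)] conceptsD[OF assms(2)] unfolding int_der_def by auto
  then show e: "e \<in> concepts G M I"
    unfolding e_def by (metis int_der_concept)
  then show "is_meet (concepts G M I) concept_le e a b"
    unfolding is_meet_def concept_le_def e_def by auto
qed

lemma finite_concepts:
  assumes "finite G" "finite M"
  shows "finite (concepts G M I)"
proof -
  have "concepts G M I \<subseteq> Pow G \<times> Pow M" unfolding concepts_def by auto
  then show ?thesis using assms by (meson finite_Pow_iff finite_SigmaI finite_subset)
qed

lemma attr_concept_in_concepts: "m \<in> M \<Longrightarrow> attr_concept G M I m \<in> concepts G M I"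
  unfolding attr_concept_def by (rule int_der_concept) auto

lemma fst_attr_concept [simp]: "fst (attr_concept G M I m) = int_der G I {m}"
  by (simp add: attr_concept_def)

lemma mem_snd_attr_concept: "m \<in> M \<Longrightarrow> m \<in> snd (attr_concept G M I m)"
  by (auto simp: attr_concept_def ext_der_def int_der_def)

lemma meet_irr_setD:
  "d \<in> meet_irr_set P le \<Longrightarrow> d \<in> P \<and> meet_irreducible P le d"
  by (simp add: meet_irr_set_def)

lemma attr_concept_in_meet_irr_set:
  "m \<in> MI_attrs G M I \<Longrightarrow> attr_concept G M I m \<in> meet_irr_set (concepts G M I) concept_le"
  unfolding MI_attrs_def meet_irr_set_def by (auto intro: attr_concept_in_concepts)

lemma maximal_concept_avoiding_object_meet_irreducible:
  assumes y: "y \<in> concepts G M I" and g: "g \<in> G" "g \<notin> fst y"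
    and above: "\<And>a. a \<in> concepts G M I \<Longrightarrow> fst y \<subset> fst a \<Longrightarrow> g \<in> fst a"
  shows "meet_irreducible (concepts G M I) concept_le y"
  unfolding meet_irreducible_def
proof (intro conjI ballI impI)
  show "\<exists>z\<in>concepts G M I. \<not> concept_le z y"
    using g by (intro bexI[OF _ top_concept]) (auto simp: concept_le_def)
next
  fix a b assume ab: "a \<in> concepts G M I" "b \<in> concepts G M I"
    and meet: "is_meet (concepts G M I) concept_le y a b"
  show "y = a \<or> y = b"
  proof (rule ccontr)
    assume "\<not> (y = a \<or> y = b)"
    then have "fst y \<subset> fst a" "fst y \<subset> fst b"
      using meet concept_eqI_fst[OF y] ab unfolding is_meet_def concept_le_def by blast+
    then have "g \<in> fst a \<inter> fst b" using above ab by blast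
    moreover have "fst a \<inter> fst b \<subseteq> fst y"
      using meet meet_concept(1)[OF ab] unfolding is_meet_def concept_le_def
      by (metis fst_conv inf_le1 inf_le2)
    ultimately show False using g by blast
  qed
qed (use y in auto)

lemma mem_extent_if_mem_meet_irr_extents_above:
  assumes fin: "finite G" "finite M"
    and x: "x \<in> concepts G M I" and g: "g \<in> G"
    and mi: "\<And>d. d \<in> meet_irr_set (concepts G M I) concept_le \<Longrightarrow> fst x \<subseteq> fst d \<Longrightarrow> g \<in> fst d"
  shows "g \<in> fst x"
proof (rule ccontr)
  assume gx: "g \<notin> fst x"
  define S where "S = {y \<in> concepts G M I. fst x \<subseteq> fst y \<and> g \<notin> fst y}"
  have "finite (fst ` S)" using finite_concepts[OF fin] unfolding S_def by auto
  moreover have "fst ` S \<noteq> {}" using x gx unfolding S_def by blast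
  ultimately obtain E where "E \<in> fst ` S" and Emax: "\<forall>b\<in>fst ` S. E \<subseteq> b \<longrightarrow> E = b"
    by (meson finite_has_maximal)
  then obtain y where yS: "y \<in> S" and yE: "fst y = E" by blast
  have y: "y \<in> concepts G M I" "fst x \<subseteq> fst y" "g \<notin> fst y" using yS unfolding S_def by auto
  have "meet_irreducible (concepts G M I) concept_le y"
  proof (rule maximal_concept_avoiding_object_meet_irreducible[OF y(1) g y(3)])
    fix a assume a: "a \<in> concepts G M I" "fst y \<subset> fst a"
    show "g \<in> fst a"
    proof (rule ccontr)
      assume "g \<notin> fst a"
      then have "a \<in> S" using a y(2) unfolding S_def by auto
      then show False using Emax yE a(2) by blast
    qed
  qed
  then show False using mi[of y] y unfolding meet_irr_set_def by blast
qed

lemma meet_irreducible_concept_upper_cover: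
  assumes fin: "finite G" "finite M"
    and c: "c \<in> concepts G M I" and mi: "meet_irreducible (concepts G M I) concept_le c"
  obtains u where "u \<in> concepts G M I" "fst c \<subset> fst u"
    "\<And>d. d \<in> concepts G M I \<Longrightarrow> fst c \<subset> fst d \<Longrightarrow> fst u \<subseteq> fst d"
proof -
  define U where "U = {d \<in> concepts G M I. fst c \<subset> fst d}"
  obtain z where "z \<in> concepts G M I" "\<not> fst z \<subseteq> fst c"
    using mi unfolding meet_irreducible_def concept_le_def by blast
  then have "fst c \<noteq> G" using conceptsD(1) by blast
  then have "(G, ext_der M I G) \<in> U" using top_concept conceptsD(1)[OF c] unfolding U_def by auto
  then have "fst ` U \<noteq> {}" by blast
  moreover have "finite (fst ` U)" using finite_concepts[OF fin] unfolding U_def by auto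
  ultimately obtain E where "E \<in> fst ` U" and Emin: "\<forall>b\<in>fst ` U. b \<subseteq> E \<longrightarrow> E = b"
    by (meson finite_has_minimal)
  then obtain u where uU: "u \<in> U" and uE: "fst u = E" by blast
  have u: "u \<in> concepts G M I" "fst c \<subset> fst u" using uU unfolding U_def by auto
  have "fst u \<subseteq> fst d" if d: "d \<in> concepts G M I" "fst c \<subset> fst d" for d
  proof -
    define e where "e = (fst u \<inter> fst d, ext_der M I (fst u \<inter> fst d))"
    have e: "e \<in> concepts G M I" "is_meet (concepts G M I) concept_le e u d"
      using meet_concept[OF u(1) d(1)] unfolding e_def by auto
    have "c \<noteq> e"
    proof
      assume "c = e"
      then have "c = u \<or> c = d" using mi u(1) d(1) e(2) unfolding meet_irreducible_def by blast
      then show False using u(2) d(2) by blast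
    qed
    then have "fst c \<noteq> fst e" using concept_eqI_fst[OF c e(1)] by blast
    moreover have "fst c \<subseteq> fst e" using u(2) d(2) unfolding e_def by auto
    ultimately have "e \<in> U" using e(1) unfolding U_def by blast
    then have "fst e \<in> fst ` U" by blast
    moreover have "fst e \<subseteq> E" using uE unfolding e_def by auto
    ultimately have "E = fst e" using Emin by blast
    then show ?thesis using uE unfolding e_def by auto
  qed
  then show ?thesis using that u by blast
qed

text \<open>Every attribute concept strictly above \<open>c\<close> lies above the upper cover of \<open>c\<close>; if \<open>c\<close>
  were no attribute concept, this would apply to all attributes of its intent.\<close>

lemma meet_irreducible_concept_is_attr_concept:
  assumes fin: "finite G" "finite M" and c: "c \<in> meet_irr_set (concepts G M I) concept_le"
  shows "\<exists>m\<in>M. c = attr_concept G M I m"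
proof (rule ccontr)
  assume no_attr: "\<not> (\<exists>m\<in>M. c = attr_concept G M I m)"
  have cc: "c \<in> concepts G M I" and mi: "meet_irreducible (concepts G M I) concept_le c"
    using meet_irr_setD[OF c] by auto
  obtain u where u: "u \<in> concepts G M I" "fst c \<subset> fst u"
    and cover: "\<And>d. d \<in> concepts G M I \<Longrightarrow> fst c \<subset> fst d \<Longrightarrow> fst u \<subseteq> fst d"
    using meet_irreducible_concept_upper_cover[OF fin cc mi] by blast
  have "fst u \<subseteq> int_der G I {m}" if m: "m \<in> snd c" for m
  proof -
    have "m \<in> M" "fst c \<subseteq> int_der G I {m}" using m mem_intent_iff[OF cc] by auto
    moreover have "fst c \<noteq> int_der G I {m}"
      using concept_eqI_fst[OF cc attr_concept_in_concepts] no_attr \<open>m \<in> M\<close> by fastforce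
    ultimately show ?thesis using cover[OF attr_concept_in_concepts] by auto
  qed
  then have "fst u \<subseteq> int_der G I (snd c)"
    using conceptsD(1)[OF u(1)] unfolding int_der_def by blast
  then show False using u(2) conceptsD(4)[OF cc] by auto
qed

lemma BC_inc_Inl [simp]: "(Inl g, m) \<in> BC_inc G M I \<longleftrightarrow> (g, m) \<in> I"
  by (auto simp: BC_inc_def)

lemma BC_inc_Inr [simp]: "(Inr k, n) \<in> BC_inc G M I \<longleftrightarrow>
   k \<in> MI_attrs G M I \<and> n \<in> M \<and> \<not> int_der G I {n} \<subseteq> int_der G I {k}"
  by (auto simp: BC_inc_def)

lemma BC_obj_cases:
  assumes "x \<in> BC_obj G M I"
  obtains g where "x = Inl g" "g \<in> G" | m where "x = Inr m" "m \<in> MI_attrs G M I"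
  using assms unfolding BC_obj_def by blast

lemma BC_intent_upward_closed:
  assumes c: "c \<in> concepts (BC_obj G M I) M (BC_inc G M I)" and n: "n \<in> snd c" and k: "k \<in> M"
    and nk: "int_der G I {n} \<subseteq> int_der G I {k}"
  shows "k \<in> snd c"
proof -
  have "(x, k) \<in> BC_inc G M I" if x: "x \<in> fst c" for x
  proof -
    have xn: "(x, n) \<in> BC_inc G M I"
      using x n conceptsD(3)[OF c] unfolding ext_der_def by blast
    from x conceptsD(1)[OF c] have "x \<in> BC_obj G M I" by blast
    then show ?thesis
    proof (cases rule: BC_obj_cases)
      case (1 g)
      then have "g \<in> int_der G I {n}" using xn unfolding int_der_def by simp
      then show ?thesis using 1 nk unfolding int_der_def by auto
    next
      case (2 m)
      then show ?thesis using xn nk k by (simp, blast)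
    qed
  qed
  then show ?thesis using k conceptsD(3)[OF c] unfolding ext_der_def by blast
qed

definition mi_filter :: "'g set \<Rightarrow> 'm set \<Rightarrow> ('g \<times> 'm) set \<Rightarrow> 'm set \<Rightarrow> ('g set \<times> 'm set) set" where
  "mi_filter G M I B = {d \<in> meet_irr_set (concepts G M I) concept_le. snd d \<subseteq> B}"

definition filter_intent :: "'g set \<Rightarrow> 'm set \<Rightarrow> ('g \<times> 'm) set \<Rightarrow> ('g set \<times> 'm set) set \<Rightarrow> 'm set" where
  "filter_intent G M I F =
     {n \<in> M. \<forall>d\<in>meet_irr_set (concepts G M I) concept_le. int_der G I {n} \<subseteq> fst d \<longrightarrow> d \<in> F}"

lemma mi_filter_in_BC_lattice: "mi_filter G M I B \<in> BC_lattice (concepts G M I) concept_le"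
  unfolding BC_lattice_def order_filters_def
proof (intro CollectI conjI ballI impI)
  fix x y assume x: "x \<in> mi_filter G M I B" and y: "y \<in> meet_irr_set (concepts G M I) concept_le"
    and "concept_le x y"
  moreover have "x \<in> concepts G M I" "y \<in> concepts G M I"
    using x y unfolding mi_filter_def meet_irr_set_def by auto
  ultimately have "snd y \<subseteq> snd x"
    using extent_subset_iff_intent_subset unfolding concept_le_def by blast
  then show "y \<in> mi_filter G M I B" using x y unfolding mi_filter_def by blast
qed (auto simp: mi_filter_def)

lemma filter_intent_mono: "F1 \<subseteq> F2 \<Longrightarrow> filter_intent G M I F1 \<subseteq> filter_intent G M I F2"
  unfolding filter_intent_def by blast

lemma mi_filter_mono: "B1 \<subseteq> B2 \<Longrightarrow> mi_filter G M I B1 \<subseteq> mi_filter G M I B2"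
  unfolding mi_filter_def by blast

text \<open>Objects \<open>Inl g\<close> are handled by the meet-irreducible decomposition of \<open>\<mu>n\<close>; an object
  \<open>Inr j\<close> with \<open>\<mu>n \<le> \<mu>j\<close> cannot lie in the extent, since it would have to satisfy \<open>j\<close> itself.\<close>

lemma BC_intent_eq_filter_intent:
  assumes fin: "finite G" "finite M" and c: "c \<in> concepts (BC_obj G M I) M (BC_inc G M I)"
  shows "filter_intent G M I (mi_filter G M I (snd c)) = snd c"
proof
  show "snd c \<subseteq> filter_intent G M I (mi_filter G M I (snd c))"
  proof
    fix n assume n: "n \<in> snd c"
    have "snd d \<subseteq> snd c"
      if d: "d \<in> meet_irr_set (concepts G M I) concept_le" "int_der G I {n} \<subseteq> fst d" for d
    proof
      fix k assume "k \<in> snd d"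
      then have "k \<in> M" "fst d \<subseteq> int_der G I {k}"
        using mem_intent_iff[of d G M I] meet_irr_setD[OF d(1)] by blast+
      then show "k \<in> snd c" using BC_intent_upward_closed[OF c n] d(2) by blast
    qed
    then show "n \<in> filter_intent G M I (mi_filter G M I (snd c))"
      using n conceptsD(2)[OF c] unfolding filter_intent_def mi_filter_def by blast
  qed
next
  show "filter_intent G M I (mi_filter G M I (snd c)) \<subseteq> snd c"
  proof
    fix n assume "n \<in> filter_intent G M I (mi_filter G M I (snd c))"
    then have n: "n \<in> M" and H: "\<And>d. d \<in> meet_irr_set (concepts G M I) concept_le \<Longrightarrow>
        int_der G I {n} \<subseteq> fst d \<Longrightarrow> snd d \<subseteq> snd c"
      unfolding filter_intent_def mi_filter_def by auto
    have "(x, n) \<in> BC_inc G M I" if x: "x \<in> fst c" for x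
    proof -
      have x_inc: "(x, b) \<in> BC_inc G M I" if "b \<in> snd c" for b
        using x that conceptsD(3)[OF c] unfolding ext_der_def by blast
      from x conceptsD(1)[OF c] have "x \<in> BC_obj G M I" by blast
      then show ?thesis
      proof (cases rule: BC_obj_cases)
        case (1 g)
        have "g \<in> fst (attr_concept G M I n)"
        proof (rule mem_extent_if_mem_meet_irr_extents_above[OF fin attr_concept_in_concepts[OF n] \<open>g \<in> G\<close>])
          fix d assume d: "d \<in> meet_irr_set (concepts G M I) concept_le"
            "fst (attr_concept G M I n) \<subseteq> fst d"
          have "(g, b) \<in> I" if "b \<in> snd d" for b
            using x_inc[of b] H[OF d(1)] d(2) that 1(1) by auto
          then have "g \<in> int_der G I (snd d)" using \<open>g \<in> G\<close> unfolding int_der_def by blast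
          then show "g \<in> fst d" using conceptsD(4) meet_irr_setD[OF d(1)] by metis
        qed
        then show ?thesis using 1 by (simp add: int_der_def)
      next
        case (2 j)
        have "\<not> int_der G I {n} \<subseteq> int_der G I {j}"
        proof
          assume "int_der G I {n} \<subseteq> int_der G I {j}"
          moreover have "j \<in> M" using 2(2) unfolding MI_attrs_def by blast
          ultimately have "j \<in> snd c"
            using H[OF attr_concept_in_meet_irr_set[OF 2(2)]] mem_snd_attr_concept[of j M G I]
            by auto
          then show False using x_inc 2(1) by fastforce
        qed
        then show ?thesis using 2 n by simp
      qed
    qed
    then show "n \<in> snd c" using n conceptsD(3)[OF c] unfolding ext_der_def by blast
  qed
qed

lemma filter_intent_is_BC_intent:
  assumes fin: "finite G" "finite M" and F: "F \<in> BC_lattice (concepts G M I) concept_le"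
  defines "B \<equiv> filter_intent G M I F"
  shows "(int_der (BC_obj G M I) (BC_inc G M I) B, B) \<in> concepts (BC_obj G M I) M (BC_inc G M I)"
proof -
  let ?A = "int_der (BC_obj G M I) (BC_inc G M I) B"
  have B: "n \<in> M" "\<And>d. d \<in> meet_irr_set (concepts G M I) concept_le \<Longrightarrow>
      int_der G I {n} \<subseteq> fst d \<Longrightarrow> d \<in> F" if "n \<in> B" for n
    using that unfolding B_def filter_intent_def by auto
  have "n \<in> B" if n: "n \<in> ext_der M (BC_inc G M I) ?A" for n
  proof (rule ccontr)
    assume "n \<notin> B"
    moreover have "n \<in> M" using n unfolding ext_der_def by blast
    ultimately obtain d where d: "d \<in> meet_irr_set (concepts G M I) concept_le"
      "int_der G I {n} \<subseteq> fst d" "d \<notin> F"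
      unfolding B_def filter_intent_def by blast
    obtain m where m: "m \<in> M" "d = attr_concept G M I m"
      using meet_irreducible_concept_is_attr_concept[OF fin d(1)] by blast
    have mMI: "m \<in> MI_attrs G M I"
      using d(1) m unfolding meet_irr_set_def MI_attrs_def by blast
    have "(Inr m, b) \<in> BC_inc G M I" if b: "b \<in> B" for b
    proof -
      have "\<not> int_der G I {b} \<subseteq> int_der G I {m}"
        using B(2)[OF b d(1)] d(3) m(2) by auto
      then show ?thesis using mMI B(1)[OF b] by simp
    qed
    moreover have "Inr m \<in> BC_obj G M I" using mMI unfolding BC_obj_def by blast
    ultimately have "Inr m \<in> ?A" unfolding int_der_def by blast
    then have "(Inr m, n) \<in> BC_inc G M I" using n unfolding ext_der_def by blast
    then show False using d(2) m(2) by simp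
  qed
  moreover have "B \<subseteq> ext_der M (BC_inc G M I) ?A"
    using B(1) unfolding ext_der_def int_der_def by blast
  moreover have "?A \<subseteq> BC_obj G M I" "B \<subseteq> M"
    using B(1) unfolding int_der_def by auto
  ultimately show ?thesis unfolding concepts_def by blast
qed

lemma mi_filter_filter_intent:
  assumes fin: "finite G" "finite M" and F: "F \<in> BC_lattice (concepts G M I) concept_le"
  shows "mi_filter G M I (filter_intent G M I F) = F"
proof (intro equalityI subsetI)
  fix d assume "d \<in> mi_filter G M I (filter_intent G M I F)"
  then have d: "d \<in> meet_irr_set (concepts G M I) concept_le" "snd d \<subseteq> filter_intent G M I F"
    unfolding mi_filter_def by blast+
  obtain m where m: "m \<in> M" "d = attr_concept G M I m"
    using meet_irreducible_concept_is_attr_concept[OF fin d(1)] by blast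
  have "m \<in> filter_intent G M I F" using d(2) mem_snd_attr_concept[OF m(1), of G I] m(2) by blast
  moreover have "int_der G I {m} \<subseteq> fst d" using m(2) by simp
  ultimately show "d \<in> F" using d(1) unfolding filter_intent_def by blast
next
  fix d assume dF: "d \<in> F"
  have "F \<subseteq> meet_irr_set (concepts G M I) concept_le"
    and up: "\<And>y. y \<in> meet_irr_set (concepts G M I) concept_le \<Longrightarrow> fst d \<subseteq> fst y \<Longrightarrow> y \<in> F"
    using F dF unfolding BC_lattice_def order_filters_def concept_le_def by blast+
  then have d: "d \<in> meet_irr_set (concepts G M I) concept_le" using dF by blast
  then have dc: "d \<in> concepts G M I" unfolding meet_irr_set_def by blast
  have "n \<in> filter_intent G M I F" if "n \<in> snd d" for n
  proof -
    have "n \<in> M" "fst d \<subseteq> int_der G I {n}" using that mem_intent_iff[OF dc] by blast+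
    then show ?thesis using up unfolding filter_intent_def by blast
  qed
  then show "d \<in> mi_filter G M I (filter_intent G M I F)"
    using d unfolding mi_filter_def by blast
qed

lemma BC_concept_le_iff_mi_filter:
  assumes fin: "finite G" "finite M"
    and c: "c1 \<in> concepts (BC_obj G M I) M (BC_inc G M I)" "c2 \<in> concepts (BC_obj G M I) M (BC_inc G M I)"
  shows "concept_le c1 c2 \<longleftrightarrow> mi_filter G M I (snd c2) \<subseteq> mi_filter G M I (snd c1)"
proof -
  have "concept_le c1 c2 \<longleftrightarrow> snd c2 \<subseteq> snd c1"
    using extent_subset_iff_intent_subset[OF c] unfolding concept_le_def .
  also have "\<dots> \<longleftrightarrow> mi_filter G M I (snd c2) \<subseteq> mi_filter G M I (snd c1)"
    using mi_filter_mono[of "snd c2" "snd c1" G M I]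
      filter_intent_mono[of "mi_filter G M I (snd c2)" "mi_filter G M I (snd c1)" G M I]
    unfolding BC_intent_eq_filter_intent[OF fin c(1)] BC_intent_eq_filter_intent[OF fin c(2)]
    by blast
  finally show ?thesis .
qed

lemma mi_filter_image_BC_concepts:
  assumes fin: "finite G" "finite M"
  shows "(\<lambda>c. mi_filter G M I (snd c)) ` concepts (BC_obj G M I) M (BC_inc G M I)
    = BC_lattice (concepts G M I) concept_le"
proof
  show "BC_lattice (concepts G M I) concept_le
    \<subseteq> (\<lambda>c. mi_filter G M I (snd c)) ` concepts (BC_obj G M I) M (BC_inc G M I)"
  proof
    fix F assume F: "F \<in> BC_lattice (concepts G M I) concept_le"
    let ?B = "filter_intent G M I F"
    have "F = mi_filter G M I (snd (int_der (BC_obj G M I) (BC_inc G M I) ?B, ?B))"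
      using mi_filter_filter_intent[OF fin F] by simp
    then show "F \<in> (\<lambda>c. mi_filter G M I (snd c)) ` concepts (BC_obj G M I) M (BC_inc G M I)"
      using filter_intent_is_BC_intent[OF fin F] by blast
  qed
qed (use mi_filter_in_BC_lattice in blast)

theorem mainTheorem5:
  fixes G :: "'g set" and M :: "'m set" and I :: "('g \<times> 'm) set"
  assumes "finite G" and "finite M" and "I \<subseteq> G \<times> M"
  shows "order_iso
           (concepts (BC_obj G M I) M (BC_inc G M I)) concept_le
           (BC_lattice (concepts G M I) concept_le) (\<lambda>F1 F2. F2 \<subseteq> F1)"
proof -
  note fin = assms(1,2)
  let ?C = "concepts (BC_obj G M I) M (BC_inc G M I)"
  let ?\<Phi> = "\<lambda>c. mi_filter G M I (snd c)"
  note ord = BC_concept_le_iff_mi_filter[OF fin]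
  have "inj_on ?\<Phi> ?C"
  proof (rule inj_onI)
    fix c1 c2 assume c: "c1 \<in> ?C" "c2 \<in> ?C" and "?\<Phi> c1 = ?\<Phi> c2"
    then have "fst c1 = fst c2" using ord[OF c] ord[OF c(2,1)] unfolding concept_le_def by blast
    then show "c1 = c2" by (rule concept_eqI_fst[OF c])
  qed
  then have "bij_betw ?\<Phi> ?C (BC_lattice (concepts G M I) concept_le)"
    unfolding bij_betw_def using mi_filter_image_BC_concepts[OF fin] by blast
  then show ?thesis
    unfolding order_iso_def using ord by blast
qed

end
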